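(* Let $n$ be a positive integer and let $\xi>2$ be an integer. If $C_{\xi}(n)\neq\emptyset$, then $\xi\le \log_2(n+1)+1$.
   Context: A partition of $n$ is identified with a point $x=(x_1,\dots,x_n)\in\mathbb{Z}_{\ge 0}^n$ satisfying $x_1+2x_2+\dots+nx_n=n$, where $x_i$ is the number of parts equal to $i$. Let $P(n)$ be the set of partitions of $n$ and $P_n=\mathrm{conv}\,P(n)\subset\mathbb{R}^n$, with vertex set $\mathrm{Vert}\,P_n$. For $x\in P(n)\setminus \mathrm{Vert}\,P_n$, let $\xi(x)$ be the minimal number $k$ such that $x=\sum_{j=1}^k\lambda_j y^j$ with $y^1,\dots,y^k\in P(n)$ all different from $x$, $\lambda_j>0$, $\sum_j\lambda_j=1$. For an integer $\xi\ge 2$, $C_\xi(n)$ denotes the set of partitions $x\in P(n)\setminus\mathrm{Vert}\,P_n$ with $\xi(x)=\xi$. *)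

theory Defs
  imports "HOL-Analysis.Analysis"
begin

text \<open>We represent points of R^n as functions on nat,
  coordinates i in {1..n}; coordinates outside {1..n} are 0.\<close>

definition partitions :: "nat \<Rightarrow> (nat \<Rightarrow> nat) set" where
  "partitions n = {x. (\<forall>i. x i \<noteq> 0 \<longrightarrow> 1 \<le> i \<and> i \<le> n) \<and> (\<Sum>i=1..n. i * x i) = n}"

definition to_real :: "(nat \<Rightarrow> nat) \<Rightarrow> nat \<Rightarrow> real" where
  "to_real x = (\<lambda>i. real (x i))"

definition conv_comb_of :: "(nat \<Rightarrow> real) \<Rightarrow> (nat \<Rightarrow> nat) set \<Rightarrow> nat \<Rightarrow> bool" where
  "conv_comb_of z Y k \<longleftrightarrow>
     (\<exists>(y :: nat \<Rightarrow> nat \<Rightarrow> nat) (w::nat \<Rightarrow> real).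
        (\<forall>j<k. y j \<in> Y) \<and> (\<forall>j<k. w j > 0) \<and> (\<Sum>j<k. w j) = 1 \<and>
        (\<forall>i. z i = (\<Sum>j<k. w j * real (y j i))))"

definition Pn :: "nat \<Rightarrow> (nat \<Rightarrow> real) set" where
  "Pn n = {z. \<exists>k. conv_comb_of z (partitions n) k}"

definition VertPn :: "nat \<Rightarrow> (nat \<Rightarrow> real) set" where
  "VertPn n = {z \<in> Pn n. \<not> (\<exists>a\<in>Pn n. \<exists>b\<in>Pn n. \<exists>t::real. a \<noteq> b \<and> 0 < t \<and> t < 1 \<and>
                 z = (\<lambda>i. t * a i + (1 - t) * b i))}"

definition xi_num :: "nat \<Rightarrow> (nat \<Rightarrow> nat) \<Rightarrow> nat" where
  "xi_num n x = (LEAST k. conv_comb_of (to_real x) (partitions n - {x}) k)"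

definition C_xi :: "nat \<Rightarrow> nat \<Rightarrow> (nat \<Rightarrow> nat) set" where
  "C_xi \<xi> n = {x \<in> partitions n. to_real x \<notin> VertPn n \<and> xi_num n x = \<xi>}"

end

theory Submission
  imports Defs
begin

text \<open>Let I be the set of distinct parts of x. If two different sets S, T \<open>\<subseteq>\<close> I have
  the same sum, exchanging them gives the partitions x - S + T and x - T + S, whose midpoint
  is x, so \<open>\<xi>(x) = 2\<close>. Hence for \<open>\<xi>(x) > 2\<close> the \<open>2^|I|\<close> subsets of I have
  distinct sums in {0..n}, and \<open>2^|I| \<le> n + 1\<close>. On the other hand every partition in a
  convex representation of x has its parts in I, so Caratheodory's argument in the
  |I|-dimensional coordinate space of I leaves at most |I| + 1 of them: \<open>\<xi> \<le> |I| + 1\<close>.\<close>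

section \<open>Linear dependence of many vectors with few coordinates\<close>

lemma pivot_elimination_sum:
  fixes v :: "'j \<Rightarrow> nat \<Rightarrow> real"
  assumes "finite K" "j0 \<in> K"
  shows "(\<Sum>j\<in>K. (if j = j0 then - (\<Sum>l\<in>K - {j0}. d l * v l a) / v j0 a else d j) * v j i)
       = (\<Sum>j\<in>K - {j0}. d j * (v j i - v j a / v j0 a * v j0 i))"
proof -
  have "(\<Sum>j\<in>K - {j0}. (if j = j0 then - (\<Sum>l\<in>K - {j0}. d l * v l a) / v j0 a else d j) * v j i)
      = (\<Sum>j\<in>K - {j0}. d j * v j i)"
    by (rule sum.cong) auto
  then show ?thesis
    using assms
    by (simp add: sum.remove sum_subtractf right_diff_distrib sum_distrib_left sum_divide_distrib mult_ac)
qed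

lemma exists_linear_relation:
  fixes v :: "'j \<Rightarrow> nat \<Rightarrow> real"
  assumes "finite J" "finite K" "card J < card K"
    and "\<And>j i. j \<in> K \<Longrightarrow> i \<notin> J \<Longrightarrow> v j i = 0"
  shows "\<exists>c. (\<exists>j\<in>K. c j \<noteq> 0) \<and> (\<forall>i. (\<Sum>j\<in>K. c j * v j i) = 0)"
  using assms
proof (induction J arbitrary: K v rule: finite_induct)
  case empty
  then obtain j0 where "j0 \<in> K" by fastforce
  with empty show ?case
    by (intro exI[of _ "\<lambda>j. if j = j0 then 1 else 0"]) auto
next
  case (insert a J)
  show ?case
  proof (cases "\<forall>j\<in>K. v j a = 0")
    case True
    then show ?thesis
      using insert.IH[of K v] insert.prems insert.hyps by (metis card_insert_disjoint insertE Suc_lessD)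
  next
    case False
    then obtain j0 where j0: "j0 \<in> K" "v j0 a \<noteq> 0" by blast
    define u where "u j i = v j i - v j a / v j0 a * v j0 i" for j i
    have "card J < card (K - {j0})"
      using insert j0 by simp
    moreover have "u j i = 0" if "j \<in> K - {j0}" "i \<notin> J" for j i
      using insert.prems(3)[of j i] insert.prems(3)[of j0 i] that j0 by (cases "i = a") (auto simp: u_def)
    ultimately obtain d where d: "\<exists>j\<in>K - {j0}. d j \<noteq> 0" "\<forall>i. (\<Sum>j\<in>K - {j0}. d j * u j i) = 0"
      using insert.IH[of "K - {j0}" u] insert.prems by blast
    show ?thesis
      using d pivot_elimination_sum[OF insert.prems(1) j0(1), of d v a]
      by (intro exI[of _ "\<lambda>j. if j = j0 then - (\<Sum>l\<in>K - {j0}. d l * v l a) / v j0 a else d j"])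
        (auto simp: u_def)
  qed
qed

section \<open>Caratheodory's theorem on a coordinate subspace\<close>

text \<open>Indexing by an arbitrary finite set lets subfamilies and disjoint unions of
  representations be formed directly.\<close>

definition convex_comb_on ::
    "(nat \<Rightarrow> real) \<Rightarrow> (nat \<Rightarrow> nat) set \<Rightarrow> 'j set \<Rightarrow> ('j \<Rightarrow> nat \<Rightarrow> nat) \<Rightarrow> ('j \<Rightarrow> real) \<Rightarrow> bool"
  where "convex_comb_on z Y K y w \<longleftrightarrow> finite K \<and> (\<forall>j\<in>K. y j \<in> Y \<and> 0 < w j) \<and> sum w K = 1 \<and>
     (\<forall>i. z i = (\<Sum>j\<in>K. w j * real (y j i)))"

lemma conv_comb_of_imp_convex_comb_on:
  assumes "conv_comb_of z Y k"
  shows "\<exists>y w. convex_comb_on z Y {..<k} y w"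
  using assms unfolding conv_comb_of_def convex_comb_on_def by auto

lemma convex_comb_on_imp_conv_comb_of:
  assumes "convex_comb_on z Y K y w"
  shows "conv_comb_of z Y (card K)"
proof -
  obtain h where h: "bij_betw h {..<card K} K"
    using assms ex_bij_betw_nat_finite[of K] by (auto simp: convex_comb_on_def atLeast0LessThan)
  have "h j \<in> K" if "j < card K" for j
    using h that by (auto simp: bij_betw_def)
  moreover have "(\<Sum>j<card K. w (h j)) = sum w K"
    using sum.reindex_bij_betw[OF h, of w] .
  moreover have "(\<Sum>j<card K. w (h j) * real (y (h j) i)) = (\<Sum>j\<in>K. w j * real (y j i))" for i
    using sum.reindex_bij_betw[OF h, of "\<lambda>j. w j * real (y j i)"] .
  ultimately show ?thesis
    using assms unfolding conv_comb_of_def convex_comb_on_def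
    by (intro exI[of _ "y \<circ> h"] exI[of _ "w \<circ> h"]) simp
qed

lemma exists_affine_relation:
  fixes y :: "'j \<Rightarrow> nat \<Rightarrow> nat"
  assumes "finite I" "finite K" "card I + 1 < card K"
    and "\<And>j i. j \<in> K \<Longrightarrow> y j i \<noteq> 0 \<Longrightarrow> i \<in> I"
  shows "\<exists>c. (\<exists>j\<in>K. 0 < c j) \<and> sum c K = 0 \<and> (\<forall>i. (\<Sum>j\<in>K. c j * real (y j i)) = 0)"
proof -
  \<comment> \<open>coordinate 0 records the weight sum, coordinate \<open>Suc i\<close> is coordinate i of \<open>y j\<close>\<close>
  define v where "v j i = (if i = 0 then 1 else real (y j (i - 1)))" for j i
  have "card (insert 0 (Suc ` I)) < card K"
    using assms(1,3) by (simp add: card_image)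
  moreover have "v j i = 0" if "j \<in> K" "i \<notin> insert 0 (Suc ` I)" for j i
    using that assms(4)[of j "i - 1"] by (cases i) (auto simp: v_def)
  ultimately obtain c where c: "\<exists>j\<in>K. c j \<noteq> 0" "\<forall>i. (\<Sum>j\<in>K. c j * v j i) = 0"
    using exists_linear_relation[of "insert 0 (Suc ` I)" K v] assms(1,2) by blast
  have sum_c: "sum c K = 0"
    using c(2)[rule_format, of 0] by (simp add: v_def)
  have "\<exists>j\<in>K. 0 < c j"
  proof (rule ccontr)
    assume "\<not> (\<exists>j\<in>K. 0 < c j)"
    then have "\<forall>j\<in>K. - c j = 0"
      using sum_nonneg_eq_0_iff[of K "\<lambda>j. - c j"] assms(2) sum_c by (force simp: sum_negf)
    then show False
      using c(1) by auto
  qed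
  moreover have "(\<Sum>j\<in>K. c j * real (y j i)) = 0" for i
    using c(2)[rule_format, of "Suc i"] by (simp add: v_def)
  ultimately show ?thesis
    using sum_c by blast
qed

lemma exists_max_feasible_step:
  fixes w c :: "'j \<Rightarrow> real"
  assumes "finite K" "\<And>j. j \<in> K \<Longrightarrow> 0 < w j" "j1 \<in> K" "0 < c j1"
  shows "\<exists>t>0. (\<forall>j\<in>K. t * c j \<le> w j) \<and> (\<exists>j\<in>K. 0 < c j \<and> t * c j = w j)"
proof -
  define P where "P = {j\<in>K. 0 < c j}"
  have P: "finite P" "j1 \<in> P"
    using assms by (auto simp: P_def)
  define t where "t = Min ((\<lambda>j. w j / c j) ` P)"
  have "t \<in> (\<lambda>j. w j / c j) ` P"
    unfolding t_def using P by (intro Min_in) auto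
  then obtain j0 where j0: "j0 \<in> P" "t = w j0 / c j0"
    by blast
  have "0 < t"
    using j0 assms(2) by (auto simp: P_def)
  moreover have "t * c j \<le> w j" if "j \<in> K" for j
  proof (cases "0 < c j")
    case True
    then have "t \<le> w j / c j"
      using P that by (auto simp: t_def P_def)
    then show ?thesis
      using True by (simp add: le_divide_eq)
  next
    case False
    with \<open>0 < t\<close> have "t * c j \<le> 0"
      by (simp add: mult_nonneg_nonpos)
    also have "0 < w j"
      using assms(2) that .
    finally show ?thesis
      by simp
  qed
  ultimately show ?thesis
    using j0 by (intro exI[of _ t]) (auto simp: P_def)
qed

lemma convex_comb_on_shrink:
  assumes comb: "convex_comb_on z Y K y w" and "j1 \<in> K" "0 < c j1" and sum_c: "sum c K = 0"
    and relation: "\<And>i. (\<Sum>j\<in>K. c j * real (y j i)) = 0"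
  shows "\<exists>K' w'. K' \<subset> K \<and> convex_comb_on z Y K' y w'"
proof -
  have K: "finite K" "\<And>j. j \<in> K \<Longrightarrow> y j \<in> Y \<and> 0 < w j"
    using comb by (auto simp: convex_comb_on_def)
  obtain t where t: "0 < t" "\<forall>j\<in>K. t * c j \<le> w j" "\<exists>j\<in>K. 0 < c j \<and> t * c j = w j"
    using exists_max_feasible_step[of K w j1 c] K assms(2,3) by blast
  define w' where "w' j = w j - t * c j" for j
  define K' where "K' = {j\<in>K. w' j \<noteq> 0}"
  have "K' \<subset> K"
    using t(3) by (force simp: K'_def w'_def)
  have sum_K': "(\<Sum>j\<in>K'. f j) = (\<Sum>j\<in>K. f j)" if "\<And>j. w' j = 0 \<Longrightarrow> f j = 0" for f :: "_ \<Rightarrow> real"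
    using that K(1) by (intro sum.mono_neutral_left) (auto simp: K'_def)
  have "convex_comb_on z Y K' y w'"
    unfolding convex_comb_on_def
  proof (intro conjI ballI allI)
    show "finite K'"
      using K(1) by (simp add: K'_def)
    fix j assume "j \<in> K'"
    then show "y j \<in> Y" "0 < w' j"
      using K t(2) by (auto simp: K'_def w'_def)
  next
    show "sum w' K' = 1"
      using sum_K'[of w'] comb sum_c
      by (simp add: w'_def convex_comb_on_def sum_subtractf sum_distrib_left[symmetric])
  next
    fix i
    show "z i = (\<Sum>j\<in>K'. w' j * real (y j i))"
      using sum_K'[of "\<lambda>j. w' j * real (y j i)"] comb relation[of i]
      by (simp add: w'_def convex_comb_on_def left_diff_distrib sum_subtractf
          sum_distrib_left[symmetric] mult.assoc)
  qed
  with \<open>K' \<subset> K\<close> show ?thesis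
    by blast
qed

lemma convex_comb_on_caratheodory:
  assumes "convex_comb_on z Y K y w" "finite I" "\<And>j i. j \<in> K \<Longrightarrow> y j i \<noteq> 0 \<Longrightarrow> i \<in> I"
  shows "\<exists>K' w'. card K' \<le> card I + 1 \<and> convex_comb_on z Y K' y w'"
proof -
  have "finite K"
    using assms(1) by (simp add: convex_comb_on_def)
  then show ?thesis
    using assms
  proof (induction K arbitrary: w rule: finite_psubset_induct)
    case (psubset K)
    show ?case
    proof (cases "card K \<le> card I + 1")
      case True
      then show ?thesis
        using psubset.prems(1) by blast
    next
      case False
      then have "card I + 1 < card K"
        by simp
      then have "\<exists>c. (\<exists>j\<in>K. 0 < c j) \<and> sum c K = 0 \<and> (\<forall>i. (\<Sum>j\<in>K. c j * real (y j i)) = 0)"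
        using psubset.prems(2) psubset.hyps(1) psubset.prems(3) by (intro exists_affine_relation)
      then obtain c j1 where c: "j1 \<in> K" "0 < c j1" "sum c K = 0"
        "\<And>i. (\<Sum>j\<in>K. c j * real (y j i)) = 0"
        by blast
      obtain K' w' where K': "K' \<subset> K" "convex_comb_on z Y K' y w'"
        using convex_comb_on_shrink[OF psubset.prems(1) c] by blast
      have "\<And>j i. j \<in> K' \<Longrightarrow> y j i \<noteq> 0 \<Longrightarrow> i \<in> I"
        using K'(1) psubset.prems(3) by blast
      then show ?thesis
        using psubset.IH[OF K' psubset.prems(2)] by blast
    qed
  qed
qed

lemma convex_comb_on_support:
  assumes comb: "convex_comb_on (to_real x) Y K y w" and "j \<in> K" "y j i \<noteq> 0"
  shows "x i \<noteq> 0"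
proof
  assume "x i = 0"
  moreover have "real (x i) = (\<Sum>l\<in>K. w l * real (y l i))"
    using comb by (simp add: convex_comb_on_def to_real_def)
  ultimately have "(\<Sum>l\<in>K. w l * real (y l i)) = 0"
    by simp
  moreover have "finite K" "\<forall>l\<in>K. 0 \<le> w l * real (y l i)"
    using comb by (auto simp: convex_comb_on_def less_imp_le)
  ultimately have "w j * real (y j i) = 0"
    using sum_nonneg_eq_0_iff[of K "\<lambda>l. w l * real (y l i)"] \<open>j \<in> K\<close> by blast
  moreover have "0 < w j"
    using comb \<open>j \<in> K\<close> by (simp add: convex_comb_on_def)
  ultimately show False
    using \<open>y j i \<noteq> 0\<close> by simp
qed

lemma partition_support_subset:
  assumes "x \<in> partitions n"
  shows "{i. x i \<noteq> 0} \<subseteq> {1..n}"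
  using assms by (auto simp: partitions_def)

lemma partition_support_finite:
  assumes "x \<in> partitions n"
  shows "finite {i. x i \<noteq> 0}"
  using partition_support_subset[OF assms] finite_subset by blast

lemma xi_num_le_card_support:
  assumes "x \<in> partitions n" and "\<exists>k. conv_comb_of (to_real x) (partitions n - {x}) k"
  shows "xi_num n x \<le> card {i. x i \<noteq> 0} + 1"
proof -
  define I where "I = {i. x i \<noteq> 0}"
  define k where "k = xi_num n x"
  have "conv_comb_of (to_real x) (partitions n - {x}) k"
    unfolding k_def xi_num_def by (rule LeastI_ex[OF assms(2)])
  then obtain y w where comb: "convex_comb_on (to_real x) (partitions n - {x}) {..<k} y w"
    using conv_comb_of_imp_convex_comb_on by blast
  have "finite I"
    using partition_support_finite[OF assms(1)] by (simp add: I_def)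
  moreover have "\<And>j i. j \<in> {..<k} \<Longrightarrow> y j i \<noteq> 0 \<Longrightarrow> i \<in> I"
    using convex_comb_on_support[OF comb] by (auto simp: I_def)
  ultimately obtain K' w' where K': "card K' \<le> card I + 1"
    "convex_comb_on (to_real x) (partitions n - {x}) K' y w'"
    using convex_comb_on_caratheodory[OF comb] by blast
  have "k \<le> card K'"
    unfolding k_def xi_num_def by (rule Least_le, rule convex_comb_on_imp_conv_comb_of[OF K'(2)])
  with K'(1) show ?thesis
    by (simp add: k_def I_def)
qed

section \<open>Non-vertices are convex combinations of other partitions\<close>

lemma convex_comb_on_Plus:
  assumes A: "convex_comb_on a Y A ya wa" and B: "convex_comb_on b Y B yb wb" and "0 < t" "t < 1"
  shows "convex_comb_on (\<lambda>i. t * a i + (1 - t) * b i) Y (A <+> B) (case_sum ya yb)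
           (case_sum (\<lambda>j. t * wa j) (\<lambda>j. (1 - t) * wb j))"
  using assms unfolding convex_comb_on_def
  by (auto simp: sum.Plus mult.assoc simp flip: sum_distrib_left)

lemma convex_comb_on_const:
  assumes "convex_comb_on z Y K y w" "\<And>j. j \<in> K \<Longrightarrow> y j = x"
  shows "z = to_real x"
proof
  fix i
  have "z i = (\<Sum>j\<in>K. w j * real (x i))"
    using assms by (simp add: convex_comb_on_def)
  then show "z i = to_real x i"
    using assms(1) by (simp add: convex_comb_on_def to_real_def sum_distrib_right[symmetric])
qed

lemma convex_comb_on_remove_self:
  assumes comb: "convex_comb_on (to_real x) Y K y w" and "j0 \<in> K" "y j0 \<noteq> x"
  shows "convex_comb_on (to_real x) (Y - {x}) {j\<in>K. y j \<noteq> x} y (\<lambda>j. w j / sum w {j\<in>K. y j \<noteq> x})"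
proof -
  define K1 where "K1 = {j\<in>K. y j \<noteq> x}"
  define s where "s = sum w K1"
  have K: "finite K" "\<And>j. j \<in> K \<Longrightarrow> y j \<in> Y \<and> 0 < w j" "sum w K = 1"
    "\<And>i. real (x i) = (\<Sum>j\<in>K. w j * real (y j i))"
    using comb by (auto simp: convex_comb_on_def to_real_def)
  have "K1 \<subseteq> K" "finite K1" "j0 \<in> K1"
    using K(1) assms(2,3) by (auto simp: K1_def)
  then have "0 < s"
    unfolding s_def using K(2) by (intro sum_pos2[of _ j0]) (auto intro: less_imp_le)
  have split: "(\<Sum>j\<in>K. f j) = (\<Sum>j\<in>K - K1. f j) + (\<Sum>j\<in>K1. f j)" for f :: "_ \<Rightarrow> real"
    using sum.subset_diff[OF \<open>K1 \<subseteq> K\<close> K(1)] .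
  have barycentre: "(\<Sum>j\<in>K1. w j * real (y j i)) = s * real (x i)" for i
  proof -
    have "(\<Sum>j\<in>K - K1. w j * real (y j i)) = (1 - s) * real (x i)"
      using split[of w] K(3) by (simp add: K1_def s_def sum_distrib_right[symmetric])
    then show ?thesis
      using split[of "\<lambda>j. w j * real (y j i)"] K(4)[of i] by (simp add: algebra_simps)
  qed
  show ?thesis
    unfolding convex_comb_on_def K1_def[symmetric] s_def[symmetric]
  proof (intro conjI ballI allI)
    fix j
    assume "j \<in> K1"
    then show "y j \<in> Y - {x}" "0 < w j / s"
      using K(2) \<open>0 < s\<close> by (auto simp: K1_def)
  next
    have "(\<Sum>j\<in>K1. w j / s) = s / s"
      unfolding s_def by (rule sum_divide_distrib[symmetric])
    then show "(\<Sum>j\<in>K1. w j / s) = 1"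
      using \<open>0 < s\<close> by simp
  next
    fix i
    have "(\<Sum>j\<in>K1. w j / s * real (y j i)) = (\<Sum>j\<in>K1. w j * real (y j i)) / s"
      unfolding sum_divide_distrib by (rule sum.cong) simp_all
    also have "\<dots> = real (x i)"
      using barycentre[of i] \<open>0 < s\<close> by simp
    finally show "to_real x i = (\<Sum>j\<in>K1. w j / s * real (y j i))"
      by (simp add: to_real_def)
  qed (fact \<open>finite K1\<close>)
qed

lemma conv_comb_of_other_partitions:
  assumes x: "x \<in> partitions n" and "to_real x \<notin> VertPn n"
  shows "\<exists>k. conv_comb_of (to_real x) (partitions n - {x}) k"
proof -
  have "conv_comb_of (to_real x) (partitions n) 1"
    using x unfolding conv_comb_of_def to_real_def by (intro exI[of _ "\<lambda>_. x"] exI[of _ "\<lambda>_. 1"]) auto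
  then have "to_real x \<in> Pn n"
    by (auto simp: Pn_def)
  then obtain a b t where ab: "a \<in> Pn n" "b \<in> Pn n" "a \<noteq> b" and t: "0 < t" "t < 1"
    and x_eq: "to_real x = (\<lambda>i. t * a i + (1 - t) * b i)"
    using assms(2) unfolding VertPn_def by blast
  obtain ka kb where "conv_comb_of a (partitions n) ka" "conv_comb_of b (partitions n) kb"
    using ab(1,2) by (auto simp: Pn_def)
  then obtain ya wa yb wb where A: "convex_comb_on a (partitions n) {..<ka} ya wa"
    and B: "convex_comb_on b (partitions n) {..<kb} yb wb"
    by (meson conv_comb_of_imp_convex_comb_on)
  have comb: "convex_comb_on (to_real x) (partitions n) ({..<ka} <+> {..<kb}) (case_sum ya yb)
      (case_sum (\<lambda>j. t * wa j) (\<lambda>j. (1 - t) * wb j))"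
    using convex_comb_on_Plus[OF A B t] x_eq by simp
  have "\<exists>j\<in>{..<ka} <+> {..<kb}. case_sum ya yb j \<noteq> x"
  proof (rule ccontr)
    assume "\<not> (\<exists>j\<in>{..<ka} <+> {..<kb}. case_sum ya yb j \<noteq> x)"
    then have all_x: "case_sum ya yb j = x" if "j \<in> {..<ka} <+> {..<kb}" for j
      using that by blast
    have "\<And>j. j \<in> {..<ka} \<Longrightarrow> ya j = x" "\<And>j. j \<in> {..<kb} \<Longrightarrow> yb j = x"
      using all_x[OF InlI] all_x[OF InrI] by simp_all
    then have "a = to_real x" "b = to_real x"
      using convex_comb_on_const[OF A] convex_comb_on_const[OF B] by blast+
    with ab(3) show False
      by simp
  qed
  then obtain j0 where "j0 \<in> {..<ka} <+> {..<kb}" "case_sum ya yb j0 \<noteq> x"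
    by blast
  from convex_comb_on_imp_conv_comb_of[OF convex_comb_on_remove_self[OF comb this]]
  show ?thesis
    by (rule exI)
qed

section \<open>Subset sums of the parts of a partition\<close>

lemma partition_exchange:
  assumes x: "x \<in> partitions n" and "\<And>i. a i \<le> x i" "\<And>i. b i \<le> x i"
    and "(\<Sum>i=1..n. i * a i) = (\<Sum>i=1..n. i * b i)"
  shows "(\<lambda>i. x i - a i + b i) \<in> partitions n"
proof -
  have "i * (x i - a i + b i) + i * a i = i * x i + i * b i" for i
  proof -
    have "x i - a i + b i + a i = x i + b i"
      using assms(2)[of i] by simp
    then show ?thesis
      by (metis add_mult_distrib2)
  qed
  then have "(\<Sum>i=1..n. i * (x i - a i + b i)) + (\<Sum>i=1..n. i * a i) = (\<Sum>i=1..n. i * x i) + (\<Sum>i=1..n. i * b i)"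
    by (simp flip: sum.distrib)
  then have "(\<Sum>i=1..n. i * (x i - a i + b i)) = n"
    using x assms(4) by (simp add: partitions_def)
  moreover have "1 \<le> i \<and> i \<le> n" if "x i - a i + b i \<noteq> 0" for i
  proof -
    have "x i \<noteq> 0"
      using that assms(3)[of i] by linarith
    then show ?thesis
      using x by (simp add: partitions_def)
  qed
  ultimately show ?thesis
    by (simp add: partitions_def)
qed

lemma conv_comb_of_midpoint:
  assumes "y0 \<in> Y" "y1 \<in> Y" "\<And>i. real (y0 i) + real (y1 i) = 2 * z i"
  shows "conv_comb_of z Y 2"
  unfolding conv_comb_of_def
proof (intro exI[of _ "\<lambda>j. if j = 0 then y0 else y1"] exI[of _ "\<lambda>_. 1 / 2"] conjI allI impI)
  fix j :: nat
  assume "j < 2"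
  then show "(if j = 0 then y0 else y1) \<in> Y"
    using assms(1,2) by simp
next
  show "(\<Sum>j<2::nat. 1 / 2 :: real) = 1"
    by simp
next
  fix i
  show "z i = (\<Sum>j<2::nat. 1 / 2 * real ((if j = 0 then y0 else y1) i))"
    using assms(3)[of i] by (simp add: eval_nat_numeral)
qed simp

lemma exchange_ne_self:
  fixes a b x :: "nat \<Rightarrow> nat"
  assumes "\<And>i. a i \<le> x i" "a \<noteq> b"
  shows "(\<lambda>i. x i - a i + b i) \<noteq> x"
proof
  assume "(\<lambda>i. x i - a i + b i) = x"
  then have eq: "x i - a i + b i = x i" for i
    by (rule fun_cong)
  have "a i = b i" for i
    using eq[of i] assms(1)[of i] by arith
  with assms(2) show False
    by auto
qed

lemma conv_comb_of_two_if_equal_weight_subpartitions: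
  assumes x: "x \<in> partitions n" and "\<And>i. a i \<le> x i" "\<And>i. b i \<le> x i" "a \<noteq> b"
    and "(\<Sum>i=1..n. i * a i) = (\<Sum>i=1..n. i * b i)"
  shows "conv_comb_of (to_real x) (partitions n - {x}) 2"
proof (rule conv_comb_of_midpoint)
  show "(\<lambda>i. x i - a i + b i) \<in> partitions n - {x}"
    using partition_exchange[OF x assms(2,3,5)] exchange_ne_self[of a x b] assms(2,4) by simp
  show "(\<lambda>i. x i - b i + a i) \<in> partitions n - {x}"
    using partition_exchange[OF x assms(3,2) assms(5)[symmetric]] exchange_ne_self[of b x a] assms(3,4)
    by (simp add: eq_commute[of b a])
  show "real (x i - a i + b i) + real (x i - b i + a i) = 2 * to_real x i" for i
    using assms(2,3)[of i] by (simp add: to_real_def)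
qed

lemma two_pow_card_le_of_inj_on_Sum:
  fixes I :: "nat set"
  assumes "finite I" "inj_on Sum (Pow I)" "\<Sum>I \<le> n"
  shows "2 ^ card I \<le> n + 1"
proof -
  have "Sum ` Pow I \<subseteq> {0..n}"
    using assms(1,3) by (auto intro: order_trans[OF sum_mono2])
  then have "card (Pow I) \<le> card {0..n}"
    by (rule card_inj_on_le[OF assms(2)]) simp
  then show ?thesis
    using assms(1) by (simp add: card_Pow)
qed

lemma partition_Sum_support_le:
  assumes x: "x \<in> partitions n"
  shows "\<Sum>{i. x i \<noteq> 0} \<le> n"
proof -
  have "\<Sum>{i. x i \<noteq> 0} \<le> (\<Sum>i\<in>{i. x i \<noteq> 0}. i * x i)"
    by (rule sum_mono) simp
  also have "\<dots> \<le> (\<Sum>i=1..n. i * x i)"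
    using partition_support_subset[OF x] by (intro sum_mono2) auto
  also have "\<dots> = n"
    using x by (simp add: partitions_def)
  finally show ?thesis .
qed

lemma inj_on_Sum_Pow_support:
  assumes x: "x \<in> partitions n" and "2 < xi_num n x"
  shows "inj_on Sum (Pow {i. x i \<noteq> 0})"
proof (rule inj_onI)
  fix S T
  assume S: "S \<in> Pow {i. x i \<noteq> 0}" and T: "T \<in> Pow {i. x i \<noteq> 0}" and "\<Sum>S = \<Sum>T"
  define ind :: "nat set \<Rightarrow> nat \<Rightarrow> nat" where "ind U i = of_bool (i \<in> U)" for U i
  have weight: "(\<Sum>i=1..n. i * ind U i) = \<Sum>U" if "U \<in> Pow {i. x i \<noteq> 0}" for U
  proof -
    have "U \<subseteq> {1..n}"
      using that partition_support_subset[OF x] by blast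
    then show ?thesis
      by (simp add: ind_def sum.If_cases Int_absorb1 flip: of_bool_def)
  qed
  show "S = T"
  proof (rule ccontr)
    assume "S \<noteq> T"
    then have "ind S \<noteq> ind T"
      by (auto simp: ind_def fun_eq_iff)
    moreover have "\<And>i. ind S i \<le> x i" "\<And>i. ind T i \<le> x i"
      using S T by (auto simp: ind_def)
    moreover have "(\<Sum>i=1..n. i * ind S i) = (\<Sum>i=1..n. i * ind T i)"
      using weight[OF S] weight[OF T] \<open>\<Sum>S = \<Sum>T\<close> by simp
    ultimately have "conv_comb_of (to_real x) (partitions n - {x}) 2"
      using conv_comb_of_two_if_equal_weight_subpartitions[OF x] by blast
    then have "xi_num n x \<le> 2"
      unfolding xi_num_def by (rule Least_le)
    with assms(2) show False
      by simp
  qed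
qed

theorem theorem2:
  fixes n \<xi> :: nat
  assumes "0 < n" and "2 < \<xi>" and "C_xi \<xi> n \<noteq> {}"
  shows "real \<xi> \<le> log 2 (real n + 1) + 1"
proof -
  obtain x where x: "x \<in> partitions n" "to_real x \<notin> VertPn n" "xi_num n x = \<xi>"
    using assms(3) by (auto simp: C_xi_def)
  define I where "I = {i. x i \<noteq> 0}"
  have "finite I"
    using partition_support_finite[OF x(1)] by (simp add: I_def)
  have "\<xi> \<le> card I + 1"
    using xi_num_le_card_support[OF x(1) conv_comb_of_other_partitions[OF x(1,2)]] x(3)
    by (simp add: I_def)
  then have "(2::nat) ^ (\<xi> - 1) \<le> 2 ^ card I"
    by (intro power_increasing) simp_all
  also have "\<dots> \<le> n + 1"
    using two_pow_card_le_of_inj_on_Sum[OF \<open>finite I\<close>] inj_on_Sum_Pow_support[OF x(1)]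
      partition_Sum_support_le[OF x(1)] assms(2) x(3) by (simp add: I_def)
  finally have "real (\<xi> - 1) \<le> log 2 (real (n + 1))"
    by (rule le_log2_of_power)
  moreover have "real (\<xi> - 1) = real \<xi> - 1"
    using assms(2) by simp
  ultimately show ?thesis
    unfolding of_nat_add of_nat_1 by linarith
qed

end
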